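(* Let $\Omega$ be the set of real symmetric $m\times m$ matrices, $\mathcal{P}$ the set of $m\times m$ orthogonal matrices, and $s(A,B,P)=\|AP-PB\|$ for $A,B\in\Omega$, $P\in\mathcal{P}$, with $\|\cdot\|$ an orthogonally invariant matrix norm. Let $\Lambda_{A_i}\in\mathbb{R}^m$ be the vector of eigenvalues of $A_i$, ordered from largest to smallest. Then $$d_\mathcal{G}(A_{1:n})=\frac12\sum_{i,j\in[n]}\|\Lambda_{A_i}-\Lambda_{A_j}\|,$$ where $d_\mathcal{G}(A_{1:n})=\min_{P\in S}\frac12\sum_{i,j\in[n]}s(A_i,A_j,P_{i,j})$ with $S=\{\{P_{i,j}\}_{i,j\in[n]}: P_{i,j}\in\mathcal{P},\ P_{i,k}P_{k,j}=P_{i,j}\ \forall i,j,k\in[n],\ P_{i,i}=I\ \forall i\in[n]\}$.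
   Context: The vector norm on the right-hand side is the one corresponding to the matrix norm: the Euclidean norm when the matrix norm is the Frobenius norm, and the $\infty$-norm when the matrix norm is the operator 2-norm. *)

theory Defs
  imports "HOL-Analysis.Analysis"
begin

type_synonym 'm mat = "real^'m^'m"

definition symmetric_mat :: "'m::finite mat \<Rightarrow> bool" where
  "symmetric_mat A \<longleftrightarrow> transpose A = A"

text \<open>Eigenvalues with algebraic multiplicity, listed from largest to smallest:
  the unique decreasingly sorted list of length m whose entries are the roots of
  the characteristic polynomial det(xI - A), counted with multiplicity.\<close>
definition eigvals_desc :: "'m::finite mat \<Rightarrow> real list" where
  "eigvals_desc A = (THE xs. length xs = CARD('m) \<and> sorted_wrt (\<ge>) xs \<and>
      (\<forall>x. det (mat x - A) = (\<Prod>i<length xs. x - xs ! i)))"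

text \<open>Matrix norms: Frobenius norm (HOL-Analysis norm on real^'m^'m) and operator 2-norm.\<close>
definition frob_norm :: "'m::finite mat \<Rightarrow> real" where
  "frob_norm M = norm M"

definition op2_norm :: "'m::finite mat \<Rightarrow> real" where
  "op2_norm M = onorm (\<lambda>x. M *v x)"

definition eucl_dist :: "real list \<Rightarrow> real list \<Rightarrow> real" where
  "eucl_dist xs ys = sqrt (\<Sum>k<length xs. (xs ! k - ys ! k)^2)"

definition inf_dist :: "real list \<Rightarrow> real list \<Rightarrow> real" where
  "inf_dist xs ys = (if xs = [] then 0 else Max ((\<lambda>k. \<bar>xs ! k - ys ! k\<bar>) ` {..<length xs}))"

definition sdist :: "('m::finite mat \<Rightarrow> real) \<Rightarrow> 'm mat \<Rightarrow> 'm mat \<Rightarrow> 'm mat \<Rightarrow> real" where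
  "sdist nm A B P = nm (A ** P - P ** B)"

definition sync_set :: "nat \<Rightarrow> (nat \<Rightarrow> nat \<Rightarrow> 'm::finite mat) set" where
  "sync_set n = {P. (\<forall>i<n. \<forall>j<n. orthogonal_matrix (P i j)) \<and>
      (\<forall>i<n. \<forall>j<n. \<forall>k<n. P i k ** P k j = P i j) \<and>
      (\<forall>i<n. P i i = mat 1)}"

definition dG_cost :: "('m::finite mat \<Rightarrow> real) \<Rightarrow> nat \<Rightarrow> (nat \<Rightarrow> 'm mat) \<Rightarrow> (nat \<Rightarrow> nat \<Rightarrow> 'm mat) \<Rightarrow> real" where
  "dG_cost nm n A P = (1/2) * (\<Sum>i<n. \<Sum>j<n. sdist nm (A i) (A j) (P i j))"

definition is_dG :: "('m::finite mat \<Rightarrow> real) \<Rightarrow> nat \<Rightarrow> (nat \<Rightarrow> 'm mat) \<Rightarrow> real \<Rightarrow> bool" where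
  "is_dG nm n A v \<longleftrightarrow> (\<exists>P\<in>sync_set n. dG_cost nm n A P = v) \<and> (\<forall>P\<in>sync_set n. v \<le> dG_cost nm n A P)"

end

theory Submission
  imports Defs "HOL-Computational_Algebra.Polynomial"
begin

text \<open>Each symmetric \<open>A\<^sub>i\<close> has an orthogonal eigendecomposition
  \<open>A\<^sub>i = U\<^sub>i diag(\<Lambda>\<^sub>i) U\<^sub>i\<^sup>T\<close> with eigenvalues in decreasing order; it is obtained by
  repeatedly maximising the Rayleigh quotient on the orthogonal complement of the eigenvectors found
  so far. For every orthogonal \<open>P\<close>, \<open>\<parallel>A\<^sub>i P - P A\<^sub>j\<parallel> \<ge> \<parallel>\<Lambda>\<^sub>i - \<Lambda>\<^sub>j\<parallel>\<close>:
  for the Frobenius norm this is the Hoffman-Wielandt inequality (the squared entries of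
  \<open>U\<^sub>i\<^sup>T P U\<^sub>j\<close> form a doubly stochastic matrix, and a rearrangement argument applies),
  for the operator norm it is Weyl's perturbation inequality, proved via Courant-Fischer.
  Equality holds for \<open>P = U\<^sub>i U\<^sub>j\<^sup>T\<close>, and the family \<open>P\<^sub>i\<^sub>j = U\<^sub>i U\<^sub>j\<^sup>T\<close> is
  synchronised, so it attains all the pairwise lower bounds at once.\<close>

section \<open>Enumerating coordinates\<close>

(* Identifies the index type with {0..<CARD('n)}, so that a vector d :: 'n => real can be
   listed as coord_list d and compared with eigvals_desc. *)
definition nth_coord :: "nat \<Rightarrow> 'n::finite" where
  "nth_coord = (SOME f. bij_betw f {..<CARD('n)} UNIV)"

lemma bij_betw_nth_coord: "bij_betw (nth_coord :: nat \<Rightarrow> 'n::finite) {..<CARD('n)} UNIV"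
proof -
  have "\<exists>f. bij_betw f {..<CARD('n)} (UNIV :: 'n set)"
    using ex_bij_betw_nat_finite[of "UNIV :: 'n set"] by (auto simp: atLeast0LessThan)
  then show ?thesis
    unfolding nth_coord_def by (rule someI_ex)
qed

definition coord_index :: "'n::finite \<Rightarrow> nat" where
  "coord_index = the_inv_into {..<CARD('n)} nth_coord"

lemma coord_index_less: "coord_index (c :: 'n::finite) < CARD('n)"
  using bij_betw_nth_coord[where 'n='n] the_inv_into_into[of nth_coord "{..<CARD('n)}" c]
  unfolding coord_index_def by (auto simp: bij_betw_def)

lemma nth_coord_index [simp]: "nth_coord (coord_index c) = (c :: 'n::finite)"
  using bij_betw_nth_coord[where 'n='n] unfolding coord_index_def
  by (auto simp: bij_betw_def intro: f_the_inv_into_f)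

lemma coord_index_nth [simp]: "k < CARD('n) \<Longrightarrow> coord_index (nth_coord k :: 'n::finite) = k"
  using bij_betw_nth_coord[where 'n='n] unfolding coord_index_def
  by (simp add: bij_betw_def the_inv_into_f_f)

lemma sum_over_coords: "(\<Sum>r\<in>UNIV. f r) = (\<Sum>k<CARD('n). f (nth_coord k :: 'n::finite))"
  using sum.reindex_bij_betw[OF bij_betw_nth_coord, of f] by simp

lemma prod_over_coords: "(\<Prod>r\<in>UNIV. f r) = (\<Prod>k<CARD('n). f (nth_coord k :: 'n::finite))"
  using prod.reindex_bij_betw[OF bij_betw_nth_coord, of f] by simp

definition coord_list :: "('n::finite \<Rightarrow> real) \<Rightarrow> real list" where
  "coord_list d = map (\<lambda>k. d (nth_coord k)) [0..<CARD('n)]"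

lemma length_coord_list [simp]: "length (coord_list (d :: 'n::finite \<Rightarrow> real)) = CARD('n)"
  by (simp add: coord_list_def)

lemma nth_coord_list [simp]: "k < CARD('n) \<Longrightarrow> coord_list d ! k = d (nth_coord k :: 'n::finite)"
  by (simp add: coord_list_def)

lemma sorted_coord_list_iff:
  "sorted_wrt (\<ge>) (coord_list (d :: 'n::finite \<Rightarrow> real)) \<longleftrightarrow>
     antimono_on {..<CARD('n)} (\<lambda>k. d (nth_coord k))"
  unfolding sorted_wrt_iff_nth_less monotone_on_def
  by (auto simp: le_less)

section \<open>The spectral theorem via the Rayleigh quotient\<close>

lemma inner_symmetric_matrix:
  fixes A :: "real^'n^'n"
  assumes "transpose A = A"
  shows "x \<bullet> (A *v y) = (A *v x) \<bullet> y"
  by (metis assms dot_lmul_matrix transpose_matrix_vector)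

lemma rayleigh_quotient_max_exists:
  fixes A :: "real^'n^'n"
  assumes S: "subspace S" and x0: "x0 \<in> S" "x0 \<noteq> 0"
  obtains v where "v \<in> S" "norm v = 1"
    "\<And>x. x \<in> S \<Longrightarrow> x \<bullet> (A *v x) \<le> (v \<bullet> (A *v v)) * (x \<bullet> x)"
proof -
  let ?K = "S \<inter> sphere 0 1"
  let ?q = "\<lambda>x. x \<bullet> (A *v x)"
  have compact: "compact ?K"
    using S by (intro closed_Int_compact closed_subspace compact_sphere)
  have "x0 /\<^sub>R norm x0 \<in> ?K"
    using x0 S by (simp add: subspace_scale)
  then have nonempty: "?K \<noteq> {}" by blast
  have continuous: "continuous_on ?K ?q"
    by (intro continuous_on_inner continuous_on_id linear_continuous_on matrix_vector_mul_bounded_linear)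
  obtain v where v: "v \<in> ?K" and vmax: "\<And>y. y \<in> ?K \<Longrightarrow> ?q y \<le> ?q v"
    using continuous_attains_sup[OF compact nonempty continuous] by blast
  have "?q x \<le> ?q v * (x \<bullet> x)" if "x \<in> S" for x
  proof (cases "x = 0")
    case False
    then have "x /\<^sub>R norm x \<in> ?K"
      using \<open>x \<in> S\<close> S by (simp add: subspace_scale)
    then have "?q (x /\<^sub>R norm x) \<le> ?q v"
      by (rule vmax)
    moreover have "?q (x /\<^sub>R norm x) = ?q x / (norm x)\<^sup>2"
      by (simp add: matrix_vector_mult_scaleR power2_eq_square divide_inverse)
    ultimately show ?thesis
      using False by (simp add: divide_le_eq power2_norm_eq_inner)
  qed simp
  with v that show ?thesis by auto
qed

lemma linear_le_quadratic_imp_zero: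
  fixes c d :: real
  assumes "0 \<le> c" and le: "\<And>t. 2 * t * c \<le> t\<^sup>2 * d"
  shows "c = 0"
proof (rule ccontr)
  assume "c \<noteq> 0"
  with \<open>0 \<le> c\<close> have "0 < c" by simp
  define t where "t = c / (\<bar>d\<bar> + 1)"
  have "0 < t" using \<open>0 < c\<close> by (simp add: t_def)
  have "t\<^sup>2 * d \<le> t\<^sup>2 * \<bar>d\<bar>"
    by (simp add: mult_left_mono)
  with le[of t] have "2 * t * c \<le> t\<^sup>2 * \<bar>d\<bar>"
    by linarith
  then have "2 * c \<le> t * \<bar>d\<bar>"
    using \<open>0 < t\<close> by (simp add: power2_eq_square mult.assoc)
  moreover have "t * \<bar>d\<bar> < c"
    using \<open>0 < c\<close> by (simp add: t_def field_simps)
  ultimately show False using \<open>0 < c\<close> by simp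
qed

lemma rayleigh_maximizer_is_eigenvector:
  fixes A :: "real^'n^'n"
  assumes sym: "transpose A = A" and S: "subspace S"
    and inv: "\<And>x. x \<in> S \<Longrightarrow> A *v x \<in> S"
    and v: "v \<in> S" "norm v = 1"
    and max: "\<And>x. x \<in> S \<Longrightarrow> x \<bullet> (A *v x) \<le> (v \<bullet> (A *v v)) * (x \<bullet> x)"
  shows "A *v v = (v \<bullet> (A *v v)) *\<^sub>R v"
proof -
  \<comment> \<open>First variation: maximality along \<open>v + t y\<close> with \<open>y = A v - lam v \<bottom> v\<close>
    gives \<open>2 t \<parallel>y\<parallel>\<^sup>2 \<le> O(t\<^sup>2)\<close> for all \<open>t\<close>.\<close>
  define lam where "lam = v \<bullet> (A *v v)"
  define y where "y = A *v v - lam *\<^sub>R v"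
  have vv: "v \<bullet> v = 1" using v by (simp add: norm_eq_1)
  have "y \<in> S"
    unfolding y_def using inv v S by (simp add: subspace_diff subspace_scale)
  have yv: "v \<bullet> y = 0"
    unfolding y_def lam_def using vv by (simp add: inner_diff_right)
  have yAv: "y \<bullet> (A *v v) = y \<bullet> y"
    using yv unfolding y_def by (simp add: inner_diff_right inner_commute)
  have "2 * t * (y \<bullet> y) \<le> t\<^sup>2 * (lam * (y \<bullet> y) - y \<bullet> (A *v y))" for t
  proof -
    have "v + t *\<^sub>R y \<in> S" using v \<open>y \<in> S\<close> S by (simp add: subspace_add subspace_scale)
    then have "(v + t *\<^sub>R y) \<bullet> (A *v (v + t *\<^sub>R y)) \<le> lam * ((v + t *\<^sub>R y) \<bullet> (v + t *\<^sub>R y))"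
      using max unfolding lam_def by blast
    moreover have "v \<bullet> (A *v y) = y \<bullet> (A *v v)"
      using inner_symmetric_matrix[OF sym, of v y] by (simp add: inner_commute)
    ultimately have "lam + 2 * t * (y \<bullet> y) + t\<^sup>2 * (y \<bullet> (A *v y)) \<le> lam * (1 + t\<^sup>2 * (y \<bullet> y))"
      using vv yv yAv unfolding lam_def
      by (simp add: algebra_simps inner_add_left inner_add_right inner_commute power2_eq_square)
    then show ?thesis by (simp add: algebra_simps)
  qed
  then have "y \<bullet> y = 0"
    by (intro linear_le_quadratic_imp_zero) auto
  then show ?thesis
    unfolding y_def lam_def by simp
qed

definition successive_max_eigenpairs ::
    "real^'n^'n \<Rightarrow> nat \<Rightarrow> (nat \<Rightarrow> real^'n) \<Rightarrow> (nat \<Rightarrow> real) \<Rightarrow> bool" where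
  "successive_max_eigenpairs A k v lam \<longleftrightarrow> (\<forall>i<k. norm (v i) = 1 \<and> A *v v i = lam i *\<^sub>R v i \<and>
     (\<forall>j<i. v j \<bullet> v i = 0) \<and> (\<forall>x. (\<forall>j<i. v j \<bullet> x = 0) \<longrightarrow> x \<bullet> (A *v x) \<le> lam i * (x \<bullet> x)))"

lemma successive_max_eigenpairs_orthonormal:
  assumes "successive_max_eigenpairs A k v lam" "i < k" "j < k"
  shows "v i \<bullet> v j = (if i = j then 1 else 0)"
  using assms unfolding successive_max_eigenpairs_def
  by (cases i j rule: linorder_cases) (auto simp: norm_eq_1 inner_commute)

lemma successive_max_eigenpairs_antimono:
  assumes "successive_max_eigenpairs A k v lam"
  shows "antimono_on {..<k} lam"
proof (rule monotone_onI)
  fix j i assume "j \<in> {..<k}" "i \<in> {..<k}" "j \<le> i"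
  with assms have unit: "norm (v i) = 1" and eig: "A *v v i = lam i *\<^sub>R v i"
    and orth: "\<forall>j'<i. v j' \<bullet> v i = 0"
    and bound: "\<forall>x. (\<forall>j'<j. v j' \<bullet> x = 0) \<longrightarrow> x \<bullet> (A *v x) \<le> lam j * (x \<bullet> x)"
    unfolding successive_max_eigenpairs_def by auto
  have "v i \<bullet> (A *v v i) \<le> lam j * (v i \<bullet> v i)"
    using bound[rule_format, of "v i"] orth \<open>j \<le> i\<close> by (meson order_less_le_trans)
  with unit eig show "lam i \<le> lam j"
    by (simp add: norm_eq_1)
qed

lemma exists_nonzero_orthogonal:
  fixes v :: "nat \<Rightarrow> real^'n"
  assumes "k < CARD('n)"
  obtains x where "x \<noteq> 0" "\<And>j. j < k \<Longrightarrow> v j \<bullet> x = 0"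
proof -
  have "span (v ` {..<k}) \<noteq> UNIV"
  proof
    assume "span (v ` {..<k}) = UNIV"
    then have "CARD('n) \<le> card (v ` {..<k})"
      using dim_le_card[of UNIV "v ` {..<k}"] by simp
    with card_image_le[of "{..<k}" v] assms show False by simp
  qed
  then obtain x where "x \<noteq> 0" and x: "\<forall>y\<in>span (v ` {..<k}). x \<bullet> y = 0"
    using span_not_UNIV_orthogonal by blast
  moreover have "v j \<bullet> x = 0" if "j < k" for j
  proof -
    have "x \<bullet> v j = 0"
      using x that by (simp add: span_base)
    then show ?thesis
      by (simp only: inner_commute)
  qed
  ultimately show ?thesis
    using that by blast
qed

lemma successive_max_eigenpairs_Suc:
  fixes A :: "real^'n^'n"
  assumes sym: "transpose A = A" and k: "k < CARD('n)"
    and pairs: "successive_max_eigenpairs A k v lam"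
  obtains w l where "successive_max_eigenpairs A (Suc k) (v(k := w)) (lam(k := l))"
proof -
  define S where "S = {x. \<forall>j<k. v j \<bullet> x = 0}"
  have S: "subspace S"
    unfolding S_def subspace_def by (simp add: inner_add_right)
  have inv: "A *v x \<in> S" if "x \<in> S" for x
  proof -
    have "v j \<bullet> (A *v x) = lam j * (v j \<bullet> x)" if "j < k" for j
      using inner_symmetric_matrix[OF sym] pairs that unfolding successive_max_eigenpairs_def by simp
    with \<open>x \<in> S\<close> show ?thesis unfolding S_def by simp
  qed
  obtain x0 where "x0 \<noteq> 0" "x0 \<in> S"
    using exists_nonzero_orthogonal[OF k, of v] unfolding S_def by blast
  then obtain w where w: "w \<in> S" "norm w = 1"
      and wmax: "\<And>x. x \<in> S \<Longrightarrow> x \<bullet> (A *v x) \<le> (w \<bullet> (A *v w)) * (x \<bullet> x)"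
    using rayleigh_quotient_max_exists[OF S] by blast
  have "A *v w = (w \<bullet> (A *v w)) *\<^sub>R w"
    by (rule rayleigh_maximizer_is_eigenvector[OF sym S inv w wmax])
  then have "successive_max_eigenpairs A (Suc k) (v(k := w)) (lam(k := w \<bullet> (A *v w)))"
    using pairs w wmax unfolding successive_max_eigenpairs_def S_def by (auto simp: less_Suc_eq)
  then show ?thesis by (rule that)
qed

lemma successive_max_eigenpairs_exist:
  fixes A :: "real^'n^'n"
  assumes "transpose A = A" "k \<le> CARD('n)"
  shows "\<exists>v lam. successive_max_eigenpairs A k v lam"
  using assms(2)
proof (induction k)
  case 0
  show ?case by (simp add: successive_max_eigenpairs_def)
next
  case (Suc k)
  then obtain v lam where "successive_max_eigenpairs A k v lam" by auto
  from successive_max_eigenpairs_Suc[OF assms(1) _ this] Suc.prems show ?case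
    by (metis Suc_le_lessD)
qed

definition diag_mat :: "('n::finite \<Rightarrow> real) \<Rightarrow> real^'n^'n" where
  "diag_mat d = (\<chi> i j. if i = j then d i else 0)"

definition sorted_eigendecomposition :: "real^'n::finite^'n \<Rightarrow> real^'n^'n \<Rightarrow> ('n \<Rightarrow> real) \<Rightarrow> bool" where
  "sorted_eigendecomposition A U d \<longleftrightarrow>
     orthogonal_matrix U \<and> A = U ** diag_mat d ** transpose U \<and> sorted_wrt (\<ge>) (coord_list d)"

lemma column_matrix_mult: "column j (M ** N) = M *v column j N"
  by (simp add: vec_eq_iff column_def matrix_matrix_mult_def matrix_vector_mult_def)

lemma column_diag_mat: "column j (M ** diag_mat d) = d j *\<^sub>R column j M"
  by (simp add: vec_eq_iff column_def matrix_matrix_mult_def diag_mat_def if_distrib cong: if_cong)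

theorem sorted_eigendecomposition_exists:
  fixes A :: "real^'n::finite^'n"
  assumes sym: "transpose A = A"
  obtains U d where "sorted_eigendecomposition A U d"
proof -
  obtain v lam where pairs: "successive_max_eigenpairs A CARD('n) v lam"
    using successive_max_eigenpairs_exist[OF sym] by blast
  define U :: "real^'n^'n" where "U = (\<chi> r c. v (coord_index c) $ r)"
  define d where "d c = lam (coord_index c)" for c :: 'n
  have col: "column c U = v (coord_index c)" for c
    by (simp add: U_def column_def vec_eq_iff)
  have oU: "orthogonal_matrix U"
    unfolding orthogonal_matrix_orthonormal_columns col orthogonal_def
    using successive_max_eigenpairs_orthonormal[OF pairs coord_index_less coord_index_less]
    by (metis nth_coord_index norm_eq_1)
  have "column c (A ** U) = column c (U ** diag_mat d)" for c
  proof -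
    have "column c (A ** U) = lam (coord_index c) *\<^sub>R v (coord_index c)"
      using pairs coord_index_less[of c]
      by (simp add: column_matrix_mult col successive_max_eigenpairs_def)
    also have "\<dots> = column c (U ** diag_mat d)"
      by (simp only: column_diag_mat col d_def)
    finally show ?thesis .
  qed
  then have AU: "A ** U = U ** diag_mat d"
    by (simp add: vec_eq_iff column_def)
  have "A = A ** (U ** transpose U)"
    using oU by (simp add: orthogonal_matrix_def)
  also have "\<dots> = U ** diag_mat d ** transpose U"
    by (simp add: matrix_mul_assoc AU)
  finally have "A = U ** diag_mat d ** transpose U" .
  moreover have "sorted_wrt (\<ge>) (coord_list d)"
    using successive_max_eigenpairs_antimono[OF pairs]
    unfolding sorted_coord_list_iff d_def monotone_on_def by simp
  ultimately show ?thesis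
    using oU that unfolding sorted_eigendecomposition_def by blast
qed

lemma sorted_eigendecomposition_antimono:
  assumes "sorted_eigendecomposition A U (d :: 'n::finite \<Rightarrow> real)"
  shows "antimono_on {..<CARD('n)} (\<lambda>k. d (nth_coord k))"
  using assms unfolding sorted_eigendecomposition_def sorted_coord_list_iff by simp

lemma sorted_eigendecomposition_eigvecs:
  assumes "sorted_eigendecomposition A U d"
  shows "A ** U = U ** diag_mat d" "transpose U ** A = diag_mat d ** transpose U"
proof -
  have U: "transpose U ** U = mat 1" and A: "A = U ** diag_mat d ** transpose U"
    using assms unfolding sorted_eigendecomposition_def orthogonal_matrix_def by auto
  show "A ** U = U ** diag_mat d"
    by (simp add: A U matrix_mul_assoc[symmetric])
  show "transpose U ** A = diag_mat d ** transpose U"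
    by (simp add: A U matrix_mul_assoc)
qed

section \<open>Eigenvalues as roots of the characteristic polynomial\<close>

definition linear_factors :: "real list \<Rightarrow> real poly" where
  "linear_factors xs = (\<Prod>a\<leftarrow>xs. [:-a, 1:])"

lemma poly_linear_factors: "poly (linear_factors xs) x = (\<Prod>i<length xs. x - xs ! i)"
  unfolding linear_factors_def
  by (induction xs) (simp_all del: prod.lessThan_Suc add: prod.lessThan_Suc_shift algebra_simps)

lemma poly_linear_factors_eq_0_iff: "poly (linear_factors xs) x = 0 \<longleftrightarrow> x \<in> set xs"
  by (auto simp: poly_linear_factors in_set_conv_nth)

lemma linear_factors_inj_on_sorted:
  assumes "sorted_wrt (\<ge>) xs" "sorted_wrt (\<ge>) ys" "linear_factors xs = linear_factors ys"
  shows "xs = ys"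
  using assms
proof (induction xs arbitrary: ys)
  case Nil
  then have "x \<notin> set ys" for x
    using poly_linear_factors_eq_0_iff[of "[]" x] poly_linear_factors_eq_0_iff[of ys x] by simp
  then show ?case by (cases ys) auto
next
  case (Cons a xs)
  then have same_roots: "set (a # xs) = set ys"
    using poly_linear_factors_eq_0_iff[of "a # xs"] poly_linear_factors_eq_0_iff[of ys] by auto
  then obtain b ys' where ys: "ys = b # ys'"
    by (cases ys) auto
  have "a \<in> set (b # ys')" "b \<in> set (a # xs)"
    using same_roots ys by auto
  with Cons.prems(1,2) ys have "a = b"
    by fastforce
  then have "[:-a, 1:] * linear_factors xs = [:-a, 1:] * linear_factors ys'"
    using Cons.prems(3) ys by (simp add: linear_factors_def)
  moreover have "[:-a, 1:] \<noteq> (0 :: real poly)" by simp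
  ultimately have "linear_factors xs = linear_factors ys'"
    using mult_left_cancel by blast
  with Cons.IH Cons.prems ys \<open>a = b\<close> show ?case by simp
qed

lemma matrix_diff_ldistrib: "(M :: 'a::ring_1^'n^'m) ** (N - N') = M ** N - M ** N'"
  by (simp add: vec_eq_iff matrix_matrix_mult_def sum_subtractf algebra_simps)

lemma matrix_diff_rdistrib: "((M :: 'a::ring_1^'n^'m) - M') ** N = M ** N - M' ** N"
  by (simp add: vec_eq_iff matrix_matrix_mult_def sum_subtractf algebra_simps)

lemma orthogonal_matrix_conj_mat:
  assumes "orthogonal_matrix (U :: real^'n^'n)"
  shows "U ** mat x ** transpose U = mat x"
proof -
  have "mat x = x *\<^sub>R (mat 1 :: real^'n^'n)"
    by (simp add: vec_eq_iff mat_def)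
  with assms show ?thesis
    by (simp add: matrix_scalar_ac scalar_matrix_assoc[symmetric] orthogonal_matrix_def)
qed

lemma det_char_sorted_eigendecomposition:
  assumes "sorted_eigendecomposition A U d"
  shows "det (mat x - A) = (\<Prod>c\<in>UNIV. x - d c)"
proof -
  have oU: "orthogonal_matrix U" and A: "A = U ** diag_mat d ** transpose U"
    using assms unfolding sorted_eigendecomposition_def by auto
  have "mat x - A = U ** (mat x - diag_mat d) ** transpose U"
    using orthogonal_matrix_conj_mat[OF oU, of x]
    by (simp add: A matrix_diff_ldistrib matrix_diff_rdistrib)
  then have "det (mat x - A) = det (U ** transpose U) * det (mat x - diag_mat d)"
    by (simp add: det_mul)
  also have "det (mat x - diag_mat d) = (\<Prod>c\<in>UNIV. x - d c)"
    by (subst det_diagonal) (auto simp: diag_mat_def mat_def)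
  finally show ?thesis
    using oU by (simp add: orthogonal_matrix_def)
qed

theorem eigvals_desc_sorted_eigendecomposition:
  fixes A :: "real^'n::finite^'n"
  assumes "sorted_eigendecomposition A U d"
  shows "eigvals_desc A = coord_list d"
  unfolding eigvals_desc_def
proof (rule the_equality)
  have char: "det (mat x - A) = (\<Prod>i<length (coord_list d). x - coord_list d ! i)" for x
    unfolding det_char_sorted_eigendecomposition[OF assms] prod_over_coords
    by (intro prod.cong) auto
  show "length (coord_list d) = CARD('n) \<and> sorted_wrt (\<ge>) (coord_list d) \<and>
      (\<forall>x. det (mat x - A) = (\<Prod>i<length (coord_list d). x - coord_list d ! i))"
    using assms char by (simp add: sorted_eigendecomposition_def)
  fix xs
  assume xs: "length xs = CARD('n) \<and> sorted_wrt (\<ge>) xs \<and>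
      (\<forall>x. det (mat x - A) = (\<Prod>i<length xs. x - xs ! i))"
  have "poly (linear_factors xs) = poly (linear_factors (coord_list d))"
    using xs char by (simp add: fun_eq_iff poly_linear_factors)
  then have "linear_factors xs = linear_factors (coord_list d)"
    by (simp only: poly_eq_poly_eq_iff)
  with xs assms show "xs = coord_list d"
    unfolding sorted_eigendecomposition_def by (blast intro: linear_factors_inj_on_sorted)
qed

section \<open>Orthogonally invariant norms\<close>

lemma inner_orthogonal_matrix_vector:
  assumes "orthogonal_matrix (Q :: real^'n^'n)"
  shows "(Q *v x) \<bullet> (Q *v y) = x \<bullet> y"
proof -
  have "orthogonal_transformation (\<lambda>x. Q *v x)"
    using assms by (simp add: orthogonal_transformation_matrix)
  then show ?thesis
    by (simp add: orthogonal_transformation_def)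
qed

lemma norm_orthogonal_matrix_vector:
  assumes "orthogonal_matrix (Q :: real^'n^'n)"
  shows "norm (Q *v x) = norm x"
  using inner_orthogonal_matrix_vector[OF assms] by (simp add: norm_eq_sqrt_inner)

lemma power2_norm_matrix: "(norm (M :: real^'n^'m))\<^sup>2 = (\<Sum>i\<in>UNIV. \<Sum>j\<in>UNIV. (M $ i $ j)\<^sup>2)"
  unfolding power2_norm_eq_inner by (simp add: inner_vec_def power2_eq_square)

lemma power2_norm_matrix_columns: "(norm (M :: real^'n^'m))\<^sup>2 = (\<Sum>j\<in>UNIV. (norm (column j M))\<^sup>2)"
  unfolding power2_norm_matrix power2_norm_eq_inner
  by (subst sum.swap) (simp add: inner_vec_def column_def power2_eq_square)

lemma norm_transpose_matrix: "norm (transpose (M :: real^'n^'m)) = norm M"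
proof -
  have "(norm (transpose M))\<^sup>2 = (norm M)\<^sup>2"
    unfolding power2_norm_matrix transpose_def by (subst sum.swap) simp
  then show ?thesis by simp
qed

lemma norm_orthogonal_matrix_mult_left:
  assumes "orthogonal_matrix (Q :: real^'m^'m)"
  shows "norm (Q ** M) = norm (M :: real^'n^'m)"
proof -
  have "(norm (Q ** M))\<^sup>2 = (norm M)\<^sup>2"
    unfolding power2_norm_matrix_columns column_matrix_mult norm_orthogonal_matrix_vector[OF assms] ..
  then show ?thesis by simp
qed

lemma norm_orthogonal_matrix_mult_right:
  assumes "orthogonal_matrix (Q :: real^'n^'n)"
  shows "norm (M ** Q) = norm (M :: real^'n^'m)"
  using norm_orthogonal_matrix_mult_left[of "transpose Q" "transpose M"] assms
  by (simp add: norm_transpose_matrix matrix_transpose_mul[symmetric])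

lemma frob_norm_orthogonal_invariant:
  assumes "orthogonal_matrix U" "orthogonal_matrix W"
  shows "frob_norm (U ** M ** W) = frob_norm M"
  using assms by (simp add: frob_norm_def norm_orthogonal_matrix_mult_left norm_orthogonal_matrix_mult_right)

lemma op2_norm_bound: "norm (M *v x) \<le> op2_norm M * norm x"
  unfolding op2_norm_def by (rule onorm[OF matrix_vector_mul_bounded_linear])

lemma op2_norm_le: "(\<And>x. norm (M *v x) \<le> b * norm x) \<Longrightarrow> op2_norm M \<le> b"
  unfolding op2_norm_def by (rule onorm_le)

lemma op2_norm_orthogonal_mult_le:
  assumes "orthogonal_matrix U" "orthogonal_matrix W"
  shows "op2_norm (U ** M ** W) \<le> op2_norm M"
proof (rule op2_norm_le)
  fix x
  have "norm ((U ** M ** W) *v x) = norm (M *v (W *v x))"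
    using assms(1) by (simp add: norm_orthogonal_matrix_vector matrix_vector_mul_assoc[symmetric])
  also have "\<dots> \<le> op2_norm M * norm (W *v x)"
    by (rule op2_norm_bound)
  finally show "norm ((U ** M ** W) *v x) \<le> op2_norm M * norm x"
    using assms(2) by (simp add: norm_orthogonal_matrix_vector)
qed

lemma op2_norm_orthogonal_invariant:
  assumes "orthogonal_matrix U" "orthogonal_matrix W"
  shows "op2_norm (U ** M ** W) = op2_norm M"
proof (rule antisym)
  show "op2_norm (U ** M ** W) \<le> op2_norm M"
    using assms by (rule op2_norm_orthogonal_mult_le)
  have "M = transpose U ** (U ** M ** W) ** transpose W"
    using assms by (simp add: matrix_mul_assoc orthogonal_matrix_def)
      (simp add: matrix_mul_assoc[symmetric])
  then show "op2_norm M \<le> op2_norm (U ** M ** W)"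
    using op2_norm_orthogonal_mult_le[of "transpose U" "transpose W" "U ** M ** W"] assms by simp
qed

lemma inner_matrix_vector_le_op2_norm: "\<bar>x \<bullet> (M *v x)\<bar> \<le> op2_norm M * (x \<bullet> x)"
proof -
  have "\<bar>x \<bullet> (M *v x)\<bar> \<le> norm x * norm (M *v x)"
    by (rule Cauchy_Schwarz_ineq2)
  also have "\<dots> \<le> norm x * (op2_norm M * norm x)"
    by (simp add: mult_left_mono op2_norm_bound)
  finally show ?thesis
    by (simp add: power2_norm_eq_inner[symmetric] power2_eq_square algebra_simps)
qed

lemma diag_mat_mult_vector: "(diag_mat e *v y) $ r = e r * y $ r"
  unfolding matrix_vector_mult_def diag_mat_def
  by (simp add: if_distrib[where f="\<lambda>z. z * _"] cong: if_cong)

lemma frob_norm_diag_mat: "frob_norm (diag_mat e) = sqrt (\<Sum>r\<in>UNIV. (e r)\<^sup>2)"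
proof -
  have "(frob_norm (diag_mat e))\<^sup>2 = (\<Sum>r\<in>UNIV. (e r)\<^sup>2)"
    unfolding frob_norm_def power2_norm_matrix diag_mat_def
    by (simp add: if_distrib[where f="\<lambda>z. z\<^sup>2"] cong: if_cong)
  then show ?thesis
    by (simp add: frob_norm_def real_sqrt_unique)
qed

lemma op2_norm_diag_mat: "op2_norm (diag_mat e) = Max (range (\<lambda>r. \<bar>e r\<bar>))"
proof (rule antisym)
  define \<mu> where "\<mu> = Max (range (\<lambda>r. \<bar>e r\<bar>))"
  have le_\<mu>: "\<bar>e r\<bar> \<le> \<mu>" for r
    unfolding \<mu>_def by simp
  then have sq_le: "(e r)\<^sup>2 \<le> \<mu>\<^sup>2" for r
    by (metis abs_ge_zero power2_abs power_mono)
  have "0 \<le> \<mu>"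
    using le_\<mu> abs_ge_zero order_trans by blast
  show "op2_norm (diag_mat e) \<le> \<mu>"
  proof (rule op2_norm_le)
    fix y
    have "(norm (diag_mat e *v y))\<^sup>2 = (\<Sum>r\<in>UNIV. (e r)\<^sup>2 * (y $ r)\<^sup>2)"
      unfolding power2_norm_eq_inner by (simp add: inner_vec_def diag_mat_mult_vector power2_eq_square algebra_simps)
    also have "\<dots> \<le> (\<Sum>r\<in>UNIV. \<mu>\<^sup>2 * (y $ r)\<^sup>2)"
      using sq_le by (intro sum_mono mult_right_mono) auto
    also have "\<dots> = (\<mu> * norm y)\<^sup>2"
      unfolding power_mult_distrib power2_norm_eq_inner by (simp add: inner_vec_def sum_distrib_left power2_eq_square)
    finally show "norm (diag_mat e *v y) \<le> \<mu> * norm y"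
      using \<open>0 \<le> \<mu>\<close> by (simp add: power2_le_iff_abs_le)
  qed
  have "\<mu> \<in> range (\<lambda>r. \<bar>e r\<bar>)"
    unfolding \<mu>_def by (rule Max_in) auto
  then obtain r0 where "\<bar>e r0\<bar> = \<mu>"
    by auto
  moreover have "diag_mat e *v axis r0 1 = e r0 *\<^sub>R axis r0 1"
    by (simp add: vec_eq_iff diag_mat_mult_vector axis_def)
  then have "norm (diag_mat e *v axis r0 1) = \<bar>e r0\<bar>"
    by simp
  moreover have "norm (diag_mat e *v axis r0 1) \<le> op2_norm (diag_mat e)"
    using op2_norm_bound[of "diag_mat e" "axis r0 1"] by simp
  ultimately show "\<mu> \<le> op2_norm (diag_mat e)"
    by simp
qed

lemma eucl_dist_coord_list:
  "eucl_dist (coord_list a) (coord_list b) = sqrt (\<Sum>r\<in>UNIV. (a r - b r)\<^sup>2)"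
  by (simp add: eucl_dist_def sum_over_coords)

lemma inf_dist_coord_list:
  fixes a b :: "'n::finite \<Rightarrow> real"
  shows "inf_dist (coord_list a) (coord_list b) = Max (range (\<lambda>r. \<bar>a r - b r\<bar>))"
proof -
  have "coord_list a \<noteq> []"
    by (simp add: coord_list_def)
  then have "inf_dist (coord_list a) (coord_list b) =
      Max ((\<lambda>k. \<bar>coord_list a ! k - coord_list b ! k\<bar>) ` {..<CARD('n)})"
    by (simp add: inf_dist_def)
  also have "(\<lambda>k. \<bar>coord_list a ! k - coord_list b ! k\<bar>) ` {..<CARD('n)} =
      (\<lambda>r. \<bar>a r - b r\<bar>) ` ((nth_coord :: nat \<Rightarrow> 'n) ` {..<CARD('n)})"
    unfolding image_image by (intro image_cong) auto
  also have "(nth_coord :: nat \<Rightarrow> 'n) ` {..<CARD('n)} = UNIV"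
    using bij_betw_nth_coord[where 'n='n] by (simp add: bij_betw_def)
  finally show ?thesis .
qed

section \<open>Doubly stochastic matrices\<close>

lemma abel_summation_nonneg:
  fixes b x :: "nat \<Rightarrow> real"
  assumes b: "antimono_on {..<m} b"
    and partial: "\<And>q. q \<le> m \<Longrightarrow> 0 \<le> (\<Sum>l<q. x l)" and total: "(\<Sum>l<m. x l) = 0"
  shows "0 \<le> (\<Sum>l<m. b l * x l)"
proof -
  have "q \<le> m \<Longrightarrow> b (q - 1) * (\<Sum>l<q. x l) \<le> (\<Sum>l<q. b l * x l)" for q
  proof (induction q)
    case (Suc q)
    have "b q * (\<Sum>l<q. x l) \<le> b (q - 1) * (\<Sum>l<q. x l)"
    proof (cases q)
      case (Suc q')
      with Suc.prems b have "b q \<le> b (q - 1)"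
        by (auto simp: monotone_on_def)
      with Suc.prems partial[of q] show ?thesis
        by (simp add: mult_right_mono)
    qed simp
    with Suc show ?case
      by (simp add: algebra_simps)
  qed simp
  from this[of m] total show ?thesis
    by simp
qed

lemma weighted_sum_le_top_sum:
  fixes a w :: "nat \<Rightarrow> real"
  assumes a: "antimono_on {..<m} a" and w: "\<And>k. k < m \<Longrightarrow> 0 \<le> w k \<and> w k \<le> 1"
    and sum_w: "(\<Sum>k<m. w k) = real q" and "q \<le> m"
  shows "(\<Sum>k<m. a k * w k) \<le> (\<Sum>k<q. a k)"
proof -
  \<comment> \<open>\<open>a k - a (q - 1)\<close> and \<open>w k - [k < q]\<close> have opposite signs for every \<open>k\<close>.\<close>
  define p where "p = a (q - 1)"
  define top where "top k = (if k < q then 1 else (0::real))" for k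
  have "(a k - p) * (w k - top k) \<le> 0" if "k < m" for k
  proof (cases "k < q")
    case True
    with a \<open>q \<le> m\<close> have "p \<le> a k"
      unfolding p_def by (auto simp: monotone_on_def)
    with True w[OF that] show ?thesis
      by (simp add: top_def mult_nonneg_nonpos)
  next
    case False
    with a \<open>q \<le> m\<close> that have "a k \<le> p"
      unfolding p_def by (auto simp: monotone_on_def)
    with False w[OF that] show ?thesis
      by (simp add: top_def mult_nonpos_nonneg)
  qed
  then have "(\<Sum>k<m. (a k - p) * (w k - top k)) \<le> 0"
    by (intro sum_nonpos) auto
  moreover have "(\<Sum>k<m. f k * top k) = (\<Sum>k<q. f k)" for f :: "nat \<Rightarrow> real"
  proof -
    have "(\<Sum>k<m. f k * top k) = (\<Sum>k\<in>{..<m} \<inter> {k. k < q}. f k)"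
      by (simp add: top_def sum.inter_restrict if_distrib[where f="\<lambda>z. _ * z"] cong: if_cong)
    also have "{..<m} \<inter> {k. k < q} = {..<q}"
      using \<open>q \<le> m\<close> by auto
    finally show ?thesis .
  qed
  from this[of a] this[of "\<lambda>_. 1"] have "(\<Sum>k<m. a k * top k) = (\<Sum>k<q. a k)" "(\<Sum>k<m. top k) = real q"
    by simp_all
  moreover have "(\<Sum>k<m. (a k - p) * (w k - top k)) =
      (\<Sum>k<m. a k * w k) - (\<Sum>k<m. a k * top k) - p * (\<Sum>k<m. w k) + p * (\<Sum>k<m. top k)"
    by (simp add: algebra_simps sum_subtractf sum.distrib sum_distrib_left)
  ultimately show ?thesis
    using sum_w by simp
qed

lemma doubly_stochastic_rearrangement:
  fixes a b :: "nat \<Rightarrow> real" and S :: "nat \<Rightarrow> nat \<Rightarrow> real"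
  assumes a: "antimono_on {..<m} a" and b: "antimono_on {..<m} b"
    and S_nonneg: "\<And>k l. k < m \<Longrightarrow> l < m \<Longrightarrow> 0 \<le> S k l"
    and rows: "\<And>k. k < m \<Longrightarrow> (\<Sum>l<m. S k l) = 1"
    and cols: "\<And>l. l < m \<Longrightarrow> (\<Sum>k<m. S k l) = 1"
  shows "(\<Sum>k<m. \<Sum>l<m. S k l * a k * b l) \<le> (\<Sum>k<m. a k * b k)"
proof -
  \<comment> \<open>The averages \<open>c\<close> of \<open>a\<close> are majorised by \<open>a\<close>; Abel summation against the
    decreasing \<open>b\<close> concludes.\<close>
  define c where "c l = (\<Sum>k<m. S k l * a k)" for l
  have "0 \<le> (\<Sum>l<q. a l - c l)" if "q \<le> m" for q
  proof -
    define w where "w k = (\<Sum>l<q. S k l)" for k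
    have "0 \<le> w k \<and> w k \<le> 1" if "k < m" for k
    proof
      show "0 \<le> w k"
        unfolding w_def using S_nonneg \<open>k < m\<close> \<open>q \<le> m\<close> by (intro sum_nonneg) auto
      have "w k \<le> (\<Sum>l<m. S k l)"
        unfolding w_def using S_nonneg \<open>k < m\<close> \<open>q \<le> m\<close> by (intro sum_mono2) auto
      with rows \<open>k < m\<close> show "w k \<le> 1" by simp
    qed
    moreover have "(\<Sum>k<m. w k) = real q"
      unfolding w_def using cols \<open>q \<le> m\<close> by (subst sum.swap) simp
    ultimately have "(\<Sum>k<m. a k * w k) \<le> (\<Sum>k<q. a k)"
      using weighted_sum_le_top_sum[OF a _ _ \<open>q \<le> m\<close>] by blast
    moreover have "(\<Sum>l<q. c l) = (\<Sum>k<m. a k * w k)"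
      unfolding c_def w_def by (subst sum.swap) (simp add: sum_distrib_left algebra_simps)
    ultimately show ?thesis
      by (simp add: sum_subtractf)
  qed
  moreover have "(\<Sum>l<m. a l - c l) = 0"
  proof -
    have "(\<Sum>l<m. c l) = (\<Sum>k<m. a k * (\<Sum>l<m. S k l))"
      unfolding c_def by (subst sum.swap) (simp add: sum_distrib_left algebra_simps)
    with rows show ?thesis
      by (simp add: sum_subtractf)
  qed
  ultimately have "0 \<le> (\<Sum>l<m. b l * (a l - c l))"
    by (intro abel_summation_nonneg[OF b])
  moreover have "(\<Sum>k<m. \<Sum>l<m. S k l * a k * b l) = (\<Sum>l<m. b l * c l)"
    unfolding c_def by (subst sum.swap) (simp add: sum_distrib_left algebra_simps)
  ultimately show ?thesis
    by (simp add: algebra_simps sum_subtractf)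
qed

lemma doubly_stochastic_sq_dist_ge:
  fixes a b :: "nat \<Rightarrow> real" and S :: "nat \<Rightarrow> nat \<Rightarrow> real"
  assumes a: "antimono_on {..<m} a" and b: "antimono_on {..<m} b"
    and S_nonneg: "\<And>k l. k < m \<Longrightarrow> l < m \<Longrightarrow> 0 \<le> S k l"
    and rows: "\<And>k. k < m \<Longrightarrow> (\<Sum>l<m. S k l) = 1"
    and cols: "\<And>l. l < m \<Longrightarrow> (\<Sum>k<m. S k l) = 1"
  shows "(\<Sum>k<m. (a k - b k)\<^sup>2) \<le> (\<Sum>k<m. \<Sum>l<m. S k l * (a k - b l)\<^sup>2)"
proof -
  have "(\<Sum>k<m. \<Sum>l<m. S k l * (a k - b l)\<^sup>2) =
      (\<Sum>k<m. (a k)\<^sup>2 * (\<Sum>l<m. S k l)) + (\<Sum>l<m. (b l)\<^sup>2 * (\<Sum>k<m. S k l))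
        - 2 * (\<Sum>k<m. \<Sum>l<m. S k l * a k * b l)"
    by (simp add: power2_diff sum_distrib_left sum_distrib_right algebra_simps sum.distrib
        sum_subtractf) (subst (2) sum.swap, simp add: algebra_simps)
  also have "\<dots> = (\<Sum>k<m. (a k)\<^sup>2) + (\<Sum>l<m. (b l)\<^sup>2) - 2 * (\<Sum>k<m. \<Sum>l<m. S k l * a k * b l)"
    using rows cols by simp
  also have "\<dots> \<ge> (\<Sum>k<m. (a k)\<^sup>2) + (\<Sum>l<m. (b l)\<^sup>2) - 2 * (\<Sum>k<m. a k * b k)"
    using doubly_stochastic_rearrangement[OF a b S_nonneg rows cols] by simp
  also have "(\<Sum>k<m. (a k)\<^sup>2) + (\<Sum>l<m. (b l)\<^sup>2) - 2 * (\<Sum>k<m. a k * b k) = (\<Sum>k<m. (a k - b k)\<^sup>2)"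
    by (simp add: power2_diff sum.distrib sum_subtractf sum_distrib_left algebra_simps)
  finally show ?thesis .
qed

section \<open>The Hoffman-Wielandt and Weyl inequalities\<close>

lemma commutator_in_eigenbases:
  assumes sA: "sorted_eigendecomposition A U a" and sB: "sorted_eigendecomposition B W b"
  shows "transpose U ** (A ** P - P ** B) ** W =
    diag_mat a ** (transpose U ** P ** W) - (transpose U ** P ** W) ** diag_mat b"
proof -
  have "transpose U ** (A ** P) ** W = diag_mat a ** (transpose U ** P ** W)"
    using sorted_eigendecomposition_eigvecs(2)[OF sA] by (simp add: matrix_mul_assoc)
  moreover have "transpose U ** (P ** B) ** W = transpose U ** P ** (B ** W)"
    by (simp add: matrix_mul_assoc)
  then have "transpose U ** (P ** B) ** W = (transpose U ** P ** W) ** diag_mat b"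
    using sorted_eigendecomposition_eigvecs(1)[OF sB] by (simp add: matrix_mul_assoc)
  ultimately show ?thesis
    by (simp add: matrix_diff_ldistrib matrix_diff_rdistrib)
qed

lemma diag_mat_mult_entry: "(diag_mat a ** V) $ r $ c = a r * V $ r $ c"
  unfolding matrix_matrix_mult_def diag_mat_def
  by (simp add: if_distrib[where f="\<lambda>z. z * _"] cong: if_cong)

lemma mult_diag_mat_entry: "(V ** diag_mat b) $ r $ c = V $ r $ c * b c"
  unfolding matrix_matrix_mult_def diag_mat_def
  by (simp add: if_distrib[where f="\<lambda>z. _ * z"] cong: if_cong)

lemma power2_norm_diag_commutator:
  "(norm (diag_mat a ** V - V ** diag_mat b))\<^sup>2 =
     (\<Sum>r\<in>UNIV. \<Sum>c\<in>UNIV. (V $ r $ c)\<^sup>2 * (a r - b c)\<^sup>2)"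
  unfolding power2_norm_matrix
  by (simp add: diag_mat_mult_entry mult_diag_mat_entry power2_eq_square algebra_simps)

lemma orthogonal_matrix_row_sum_sq:
  assumes "orthogonal_matrix (V :: real^'n^'n)"
  shows "(\<Sum>c\<in>UNIV. (V $ r $ c)\<^sup>2) = 1"
proof -
  have "(norm (row r V))\<^sup>2 = 1"
    using assms by (simp add: orthogonal_matrix_orthonormal_rows)
  then show ?thesis
    unfolding power2_norm_eq_inner by (simp add: inner_vec_def row_def power2_eq_square)
qed

lemma orthogonal_matrix_column_sum_sq:
  assumes "orthogonal_matrix (V :: real^'n^'n)"
  shows "(\<Sum>r\<in>UNIV. (V $ r $ c)\<^sup>2) = 1"
  using orthogonal_matrix_row_sum_sq[of "transpose V" c] assms
  unfolding orthogonal_matrix_transpose by (simp add: transpose_def)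

theorem hoffman_wielandt:
  fixes A B :: "real^'n::finite^'n"
  assumes sA: "sorted_eigendecomposition A U a" and sB: "sorted_eigendecomposition B W b"
    and P: "orthogonal_matrix P"
  shows "eucl_dist (coord_list a) (coord_list b) \<le> frob_norm (A ** P - P ** B)"
proof -
  have U: "orthogonal_matrix U" and W: "orthogonal_matrix W"
    using sA sB unfolding sorted_eigendecomposition_def by auto
  \<comment> \<open>\<open>V\<close> is orthogonal, so its squared entries form a doubly stochastic matrix.\<close>
  define V where "V = transpose U ** P ** W"
  have V: "orthogonal_matrix V"
    unfolding V_def using U W P by (simp add: orthogonal_matrix_mul)
  have "frob_norm (A ** P - P ** B) = norm (diag_mat a ** V - V ** diag_mat b)"
    using frob_norm_orthogonal_invariant[of "transpose U" W "A ** P - P ** B"] U W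
    by (simp add: commutator_in_eigenbases[OF sA sB] frob_norm_def V_def)
  define S where "S k l = (V $ nth_coord k $ nth_coord l)\<^sup>2" for k l
  have "(\<Sum>k<CARD('n). (a (nth_coord k) - b (nth_coord k))\<^sup>2) \<le>
      (\<Sum>k<CARD('n). \<Sum>l<CARD('n). S k l * (a (nth_coord k) - b (nth_coord l))\<^sup>2)"
  proof (rule doubly_stochastic_sq_dist_ge)
    show "antimono_on {..<CARD('n)} (\<lambda>k. a (nth_coord k))"
      using sA by (rule sorted_eigendecomposition_antimono)
    show "antimono_on {..<CARD('n)} (\<lambda>k. b (nth_coord k))"
      using sB by (rule sorted_eigendecomposition_antimono)
    show "0 \<le> S k l" for k l
      by (simp add: S_def)
    show "(\<Sum>l<CARD('n). S k l) = 1" "(\<Sum>l<CARD('n). S l k) = 1" for k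
      using orthogonal_matrix_row_sum_sq[OF V] orthogonal_matrix_column_sum_sq[OF V]
      by (simp_all add: S_def sum_over_coords)
  qed
  also have "\<dots> = (frob_norm (A ** P - P ** B))\<^sup>2"
    by (simp add: \<open>frob_norm _ = _\<close> power2_norm_diag_commutator sum_over_coords S_def)
  finally show ?thesis
    unfolding eucl_dist_coord_list sum_over_coords
    using real_sqrt_le_mono by (fastforce simp: frob_norm_def)
qed

lemma quadratic_form_sorted_eigendecomposition:
  assumes "sorted_eigendecomposition A U a"
  shows "(U *v y) \<bullet> (A *v (U *v y)) = (\<Sum>r\<in>UNIV. a r * (y $ r)\<^sup>2)"
proof -
  have U: "orthogonal_matrix U"
    using assms unfolding sorted_eigendecomposition_def by simp
  have "A *v (U *v y) = U *v (diag_mat a *v y)"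
    by (simp add: matrix_vector_mul_assoc sorted_eigendecomposition_eigvecs(1)[OF assms])
  then have "(U *v y) \<bullet> (A *v (U *v y)) = y \<bullet> (diag_mat a *v y)"
    by (simp add: inner_orthogonal_matrix_vector[OF U])
  also have "\<dots> = (\<Sum>r\<in>UNIV. a r * (y $ r)\<^sup>2)"
    by (simp add: inner_vec_def diag_mat_mult_vector power2_eq_square algebra_simps)
  finally show ?thesis .
qed

lemma quadratic_form_ge_on_support:
  assumes sA: "sorted_eigendecomposition A U a" and ge: "\<And>r. y $ r \<noteq> 0 \<Longrightarrow> c \<le> a r"
  shows "c * ((U *v y) \<bullet> (U *v y)) \<le> (U *v y) \<bullet> (A *v (U *v y))"
proof -
  have U: "orthogonal_matrix U"
    using sA unfolding sorted_eigendecomposition_def by simp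
  have "c * ((U *v y) \<bullet> (U *v y)) = (\<Sum>r\<in>UNIV. c * (y $ r)\<^sup>2)"
    by (simp only: inner_orthogonal_matrix_vector[OF U]) (simp add: inner_vec_def power2_eq_square sum_distrib_left)
  also have "\<dots> \<le> (\<Sum>r\<in>UNIV. a r * (y $ r)\<^sup>2)"
  proof (rule sum_mono)
    fix r
    show "c * (y $ r)\<^sup>2 \<le> a r * (y $ r)\<^sup>2"
      by (cases "y $ r = 0") (simp_all add: ge mult_right_mono)
  qed
  finally show ?thesis
    by (simp add: quadratic_form_sorted_eigendecomposition[OF sA])
qed

lemma quadratic_form_le_on_support:
  assumes sA: "sorted_eigendecomposition A U a" and le: "\<And>r. y $ r \<noteq> 0 \<Longrightarrow> a r \<le> c"
  shows "(U *v y) \<bullet> (A *v (U *v y)) \<le> c * ((U *v y) \<bullet> (U *v y))"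
proof -
  have U: "orthogonal_matrix U"
    using sA unfolding sorted_eigendecomposition_def by simp
  have "(\<Sum>r\<in>UNIV. a r * (y $ r)\<^sup>2) \<le> (\<Sum>r\<in>UNIV. c * (y $ r)\<^sup>2)"
  proof (rule sum_mono)
    fix r
    show "a r * (y $ r)\<^sup>2 \<le> c * (y $ r)\<^sup>2"
      by (cases "y $ r = 0") (simp_all add: le mult_right_mono)
  qed
  also have "\<dots> = c * ((U *v y) \<bullet> (U *v y))"
    by (simp only: inner_orthogonal_matrix_vector[OF U]) (simp add: inner_vec_def power2_eq_square sum_distrib_left)
  finally show ?thesis
    by (simp add: quadratic_form_sorted_eigendecomposition[OF sA])
qed

lemma subspaces_common_nonzero:
  fixes X Y :: "(real^'n) set"
  assumes X: "subspace X" and Y: "subspace Y" and dims: "CARD('n) < dim X + dim Y"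
  obtains x where "x \<in> X" "x \<in> Y" "x \<noteq> 0"
proof -
  have "dim {x + y |x y. x \<in> X \<and> y \<in> Y} + dim (X \<inter> Y) = dim X + dim Y"
    by (rule dim_sums_Int[OF X Y])
  moreover have "dim {x + y |x y. x \<in> X \<and> y \<in> Y} \<le> CARD('n)"
    by (rule dim_subset_UNIV_cart)
  ultimately have "dim (X \<inter> Y) \<noteq> 0"
    using dims by linarith
  with that show ?thesis
    by auto
qed

lemma orthogonal_image_coord_subspace:
  fixes U :: "real^'n^'n"
  assumes "orthogonal_matrix U"
  shows "subspace ((\<lambda>y. U *v y) ` {y. \<forall>i. i \<notin> D \<longrightarrow> y $ i = 0})"
    and "dim ((\<lambda>y. U *v y) ` {y. \<forall>i. i \<notin> D \<longrightarrow> y $ i = 0}) = card D"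
proof -
  have coords: "subspace {y :: real^'n. \<forall>i. i \<notin> D \<longrightarrow> y $ i = 0}"
    by (simp add: subspace_def)
  show "subspace ((\<lambda>y. U *v y) ` {y. \<forall>i. i \<notin> D \<longrightarrow> y $ i = 0})"
    by (rule linear_subspace_image[OF matrix_vector_mul_linear coords])
  have "inj (\<lambda>y. U *v y)"
  proof (rule inj_on_inverseI)
    show "transpose U *v (U *v y) = y" for y
      using assms by (simp add: matrix_vector_mul_assoc orthogonal_matrix_def)
  qed
  then show "dim ((\<lambda>y. U *v y) ` {y. \<forall>i. i \<notin> D \<longrightarrow> y $ i = 0}) = card D"
    using eucl.dim_image_eq[OF matrix_vector_mul_linear, of U "{y. \<forall>i. i \<notin> D \<longrightarrow> y $ i = 0}"]
      dim_substandard_cart[where 'a=real and 'n='n, of D]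
    by (simp add: inj_on_subset dim_vec_eq)
qed

lemma card_nth_coord_image:
  assumes "K \<subseteq> {..<CARD('n)}"
  shows "card ((nth_coord :: nat \<Rightarrow> 'n::finite) ` K) = card K"
  using bij_betw_nth_coord[where 'n='n] assms
  by (intro card_image) (auto simp: bij_betw_def intro: inj_on_subset)

lemma top_bottom_coord_images_intersect:
  fixes U W :: "real^'n::finite^'n"
  assumes U: "orthogonal_matrix U" and W: "orthogonal_matrix W" and k: "k < CARD('n)"
  obtains y z where "U *v y = W *v z" "U *v y \<noteq> 0"
    "\<forall>i. i \<notin> nth_coord ` {..k} \<longrightarrow> y $ i = 0"
    "\<forall>i. i \<notin> nth_coord ` {k..<CARD('n)} \<longrightarrow> z $ i = 0"
proof -
  define top where "top = (nth_coord :: nat \<Rightarrow> 'n) ` {..k}"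
  define bottom where "bottom = (nth_coord :: nat \<Rightarrow> 'n) ` {k..<CARD('n)}"
  let ?X = "(\<lambda>y. U *v y) ` {y. \<forall>i. i \<notin> top \<longrightarrow> y $ i = 0}"
  let ?Y = "(\<lambda>y. W *v y) ` {y. \<forall>i. i \<notin> bottom \<longrightarrow> y $ i = 0}"
  have "card top = card {..k}"
    unfolding top_def by (rule card_nth_coord_image) (use k in auto)
  moreover have "card bottom = card {k..<CARD('n)}"
    unfolding bottom_def by (rule card_nth_coord_image) auto
  ultimately have "CARD('n) < dim ?X + dim ?Y"
    using k orthogonal_image_coord_subspace(2)[OF U] orthogonal_image_coord_subspace(2)[OF W] by simp
  then obtain x where "x \<in> ?X" "x \<in> ?Y" "x \<noteq> 0"
    by (rule subspaces_common_nonzero[OF orthogonal_image_coord_subspace(1)[OF U]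
          orthogonal_image_coord_subspace(1)[OF W]])
  with that show ?thesis
    unfolding top_def bottom_def by blast
qed

lemma weyl_eigenvalue_le:
  fixes A C :: "real^'n::finite^'n"
  assumes sA: "sorted_eigendecomposition A U a" and sC: "sorted_eigendecomposition C W c"
    and k: "k < CARD('n)" and bound: "\<And>x. x \<bullet> ((A - C) *v x) \<le> e * (x \<bullet> x)"
  shows "a (nth_coord k) \<le> c (nth_coord k) + e"
proof -
  have U: "orthogonal_matrix U" and W: "orthogonal_matrix W"
    using sA sC unfolding sorted_eigendecomposition_def by auto
  \<comment> \<open>Courant-Fischer: test both quadratic forms on a vector \<open>x\<close> in the span of the top
    \<open>k + 1\<close> eigenvectors of \<open>A\<close> and of the bottom \<open>CARD('n) - k\<close> eigenvectors of \<open>C\<close>.\<close>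
  obtain y z where x: "U *v y = W *v z" "U *v y \<noteq> 0"
    and y: "\<forall>i. i \<notin> nth_coord ` {..k} \<longrightarrow> y $ i = 0"
    and z: "\<forall>i. i \<notin> nth_coord ` {k..<CARD('n)} \<longrightarrow> z $ i = 0"
    using top_bottom_coord_images_intersect[OF U W k] by blast
  define x where "x = U *v y"
  have a_mono: "antimono_on {..<CARD('n)} (\<lambda>k. a (nth_coord k))"
    and c_mono: "antimono_on {..<CARD('n)} (\<lambda>k. c (nth_coord k))"
    using sA sC by (auto intro: sorted_eigendecomposition_antimono)
  have "a (nth_coord k) * (x \<bullet> x) \<le> x \<bullet> (A *v x)"
    unfolding x_def
  proof (rule quadratic_form_ge_on_support[OF sA])
    fix r assume "y $ r \<noteq> 0"
    with y obtain p where "p \<le> k" "r = nth_coord p"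
      by auto
    with a_mono k show "a (nth_coord k) \<le> a r"
      by (auto simp: monotone_on_def)
  qed
  moreover have "x \<bullet> (C *v x) \<le> c (nth_coord k) * (x \<bullet> x)"
    unfolding x_def x(1)
  proof (rule quadratic_form_le_on_support[OF sC])
    fix r assume "z $ r \<noteq> 0"
    with z have "r \<in> nth_coord ` {k..<CARD('n)}"
      by blast
    then obtain p where "k \<le> p" "p < CARD('n)" "r = nth_coord p"
      by auto
    with c_mono k show "c r \<le> c (nth_coord k)"
      by (auto simp: monotone_on_def)
  qed
  moreover have "x \<bullet> (A *v x) = x \<bullet> (C *v x) + x \<bullet> ((A - C) *v x)"
    by (simp add: matrix_vector_mult_diff_rdistrib inner_diff_right)
  ultimately have "a (nth_coord k) * (x \<bullet> x) \<le> (c (nth_coord k) + e) * (x \<bullet> x)"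
    unfolding distrib_right using bound[of x] by linarith
  moreover have "0 < x \<bullet> x"
    using x(2) by (simp add: x_def)
  ultimately show ?thesis
    by (rule mult_right_le_imp_le)
qed

lemma sorted_eigendecomposition_orthogonal_conj:
  assumes "sorted_eigendecomposition B W b" and P: "orthogonal_matrix P"
  shows "sorted_eigendecomposition (P ** B ** transpose P) (P ** W) b"
  using assms unfolding sorted_eigendecomposition_def
  by (simp add: orthogonal_matrix_mul matrix_transpose_mul matrix_mul_assoc)

theorem weyl_perturbation:
  fixes A B :: "real^'n::finite^'n"
  assumes sA: "sorted_eigendecomposition A U a" and sB: "sorted_eigendecomposition B W b"
    and P: "orthogonal_matrix P"
  shows "inf_dist (coord_list a) (coord_list b) \<le> op2_norm (A ** P - P ** B)"
proof -
  define C where "C = P ** B ** transpose P"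
  define e where "e = op2_norm (A ** P - P ** B)"
  have sC: "sorted_eigendecomposition C (P ** W) b"
    unfolding C_def using sB P by (rule sorted_eigendecomposition_orthogonal_conj)
  have "A - C = (A ** P - P ** B) ** transpose P"
    using P by (simp add: C_def matrix_diff_rdistrib orthogonal_matrix_def matrix_mul_assoc[symmetric])
  then have "op2_norm (A - C) = e"
    using op2_norm_orthogonal_invariant[of "mat 1" "transpose P" "A ** P - P ** B"] P
    by (simp add: e_def orthogonal_matrix_id)
  then have bound: "\<bar>x \<bullet> ((A - C) *v x)\<bar> \<le> e * (x \<bullet> x)" for x
    using inner_matrix_vector_le_op2_norm[of x "A - C"] by simp
  have "x \<bullet> ((C - A) *v x) = - (x \<bullet> ((A - C) *v x))" for x
    by (simp add: matrix_vector_mult_diff_rdistrib inner_diff_right)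
  with bound have AC: "x \<bullet> ((A - C) *v x) \<le> e * (x \<bullet> x)"
    and CA: "x \<bullet> ((C - A) *v x) \<le> e * (x \<bullet> x)" for x
    by (simp_all add: abs_le_iff)
  have "\<bar>a (nth_coord k) - b (nth_coord k)\<bar> \<le> e" if "k < CARD('n)" for k
    using weyl_eigenvalue_le[OF sA sC that AC] weyl_eigenvalue_le[OF sC sA that CA] by (simp add: abs_le_iff)
  from this[OF coord_index_less] have "\<bar>a r - b r\<bar> \<le> e" for r
    by simp
  then show ?thesis
    unfolding inf_dist_coord_list e_def by simp
qed

lemma commutator_at_aligned_eigenbases:
  assumes sA: "sorted_eigendecomposition A U a" and sB: "sorted_eigendecomposition B W b"
  shows "A ** (U ** transpose W) - (U ** transpose W) ** B = U ** diag_mat (\<lambda>r. a r - b r) ** transpose W"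
proof -
  have "A ** (U ** transpose W) = U ** diag_mat a ** transpose W"
    using sorted_eigendecomposition_eigvecs(1)[OF sA] by (simp add: matrix_mul_assoc)
  moreover have "(U ** transpose W) ** B = U ** diag_mat b ** transpose W"
    using sorted_eigendecomposition_eigvecs(2)[OF sB] by (simp add: matrix_mul_assoc[symmetric])
  moreover have "diag_mat (\<lambda>r. a r - b r) = diag_mat a - diag_mat b"
    by (simp add: vec_eq_iff diag_mat_def)
  ultimately show ?thesis
    by (simp add: matrix_diff_ldistrib matrix_diff_rdistrib)
qed

lemma frob_norm_at_aligned_eigenbases:
  assumes sA: "sorted_eigendecomposition A U a" and sB: "sorted_eigendecomposition B W b"
  shows "frob_norm (A ** (U ** transpose W) - (U ** transpose W) ** B) = eucl_dist (coord_list a) (coord_list b)"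
  using sA sB unfolding commutator_at_aligned_eigenbases[OF sA sB] sorted_eigendecomposition_def
  by (simp add: frob_norm_orthogonal_invariant frob_norm_diag_mat eucl_dist_coord_list)

lemma op2_norm_at_aligned_eigenbases:
  assumes sA: "sorted_eigendecomposition A U a" and sB: "sorted_eigendecomposition B W b"
  shows "op2_norm (A ** (U ** transpose W) - (U ** transpose W) ** B) = inf_dist (coord_list a) (coord_list b)"
  using sA sB unfolding commutator_at_aligned_eigenbases[OF sA sB] sorted_eigendecomposition_def
  by (simp add: op2_norm_orthogonal_invariant op2_norm_diag_mat inf_dist_coord_list)

section \<open>Synchronised families\<close>

lemma aligned_family_in_sync_set:
  assumes U: "\<And>i. i < n \<Longrightarrow> orthogonal_matrix (U i)"
  shows "(\<lambda>i j. U i ** transpose (U j)) \<in> sync_set n"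
  unfolding sync_set_def
proof (intro CollectI conjI allI impI)
  fix i j k assume "i < n" "j < n" "k < n"
  then show "orthogonal_matrix (U i ** transpose (U j))"
    using U by (simp add: orthogonal_matrix_mul)
  have "U i ** transpose (U k) ** (U k ** transpose (U j)) = U i ** (transpose (U k) ** U k) ** transpose (U j)"
    by (simp add: matrix_mul_assoc)
  with U \<open>k < n\<close> show "U i ** transpose (U k) ** (U k ** transpose (U j)) = U i ** transpose (U j)"
    by (simp add: orthogonal_matrix_def)
next
  fix i assume "i < n"
  with U show "U i ** transpose (U i) = mat 1"
    by (simp add: orthogonal_matrix_def)
qed

lemma is_dG_of_pairwise_optimum:
  fixes A :: "nat \<Rightarrow> real^'n::finite^'n"
  assumes U: "\<And>i. i < n \<Longrightarrow> orthogonal_matrix (U i)"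
    and lower: "\<And>i j P. i < n \<Longrightarrow> j < n \<Longrightarrow> orthogonal_matrix P \<Longrightarrow> \<delta> i j \<le> sdist nm (A i) (A j) P"
    and attained: "\<And>i j. i < n \<Longrightarrow> j < n \<Longrightarrow> sdist nm (A i) (A j) (U i ** transpose (U j)) = \<delta> i j"
  shows "is_dG nm n A ((1/2) * (\<Sum>i<n. \<Sum>j<n. \<delta> i j))"
  unfolding is_dG_def
proof
  show "\<exists>P\<in>sync_set n. dG_cost nm n A P = (1/2) * (\<Sum>i<n. \<Sum>j<n. \<delta> i j)"
  proof
    show "dG_cost nm n A (\<lambda>i j. U i ** transpose (U j)) = (1/2) * (\<Sum>i<n. \<Sum>j<n. \<delta> i j)"
      unfolding dG_cost_def using attained by (intro arg_cong[where f="\<lambda>x. (1/2) * x"] sum.cong) auto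
  qed (rule aligned_family_in_sync_set[OF U])
  show "\<forall>P\<in>sync_set n. (1/2) * (\<Sum>i<n. \<Sum>j<n. \<delta> i j) \<le> dG_cost nm n A P"
  proof
    fix P :: "nat \<Rightarrow> nat \<Rightarrow> real^'n^'n"
    assume "P \<in> sync_set n"
    then have "orthogonal_matrix (P i j)" if "i < n" "j < n" for i j
      using that unfolding sync_set_def by blast
    then show "(1/2) * (\<Sum>i<n. \<Sum>j<n. \<delta> i j) \<le> dG_cost nm n A P"
      unfolding dG_cost_def using lower by (intro mult_left_mono sum_mono) auto
  qed
qed

theorem theorem7:
  fixes n :: nat and A :: "nat \<Rightarrow> real^'m::finite^'m"
  assumes "\<forall>i<n. symmetric_mat (A i)"
  shows "is_dG frob_norm n A
           ((1/2) * (\<Sum>i<n. \<Sum>j<n. eucl_dist (eigvals_desc (A i)) (eigvals_desc (A j))))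
       \<and> is_dG op2_norm n A
           ((1/2) * (\<Sum>i<n. \<Sum>j<n. inf_dist (eigvals_desc (A i)) (eigvals_desc (A j))))"
proof -
  have "\<forall>i. \<exists>U d. i < n \<longrightarrow> sorted_eigendecomposition (A i) U d"
    using assms sorted_eigendecomposition_exists unfolding symmetric_mat_def by metis
  then obtain U d where dec: "\<And>i. i < n \<Longrightarrow> sorted_eigendecomposition (A i) (U i) (d i)"
    by metis
  have U: "orthogonal_matrix (U i)" if "i < n" for i
    using dec[OF that] unfolding sorted_eigendecomposition_def by simp
  have "is_dG frob_norm n A ((1/2) * (\<Sum>i<n. \<Sum>j<n. eucl_dist (coord_list (d i)) (coord_list (d j))))"
    by (rule is_dG_of_pairwise_optimum[OF U])
      (use hoffman_wielandt[OF dec dec] frob_norm_at_aligned_eigenbases[OF dec dec] in \<open>auto simp: sdist_def\<close>)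
  moreover have "is_dG op2_norm n A ((1/2) * (\<Sum>i<n. \<Sum>j<n. inf_dist (coord_list (d i)) (coord_list (d j))))"
    by (rule is_dG_of_pairwise_optimum[OF U])
      (use weyl_perturbation[OF dec dec] op2_norm_at_aligned_eigenbases[OF dec dec] in \<open>auto simp: sdist_def\<close>)
  ultimately show ?thesis
    by (simp add: eigvals_desc_sorted_eigendecomposition[OF dec])
qed

end
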